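(* Let $V=V_0\uplus V_1\uplus\dots\uplus V_m$ be a partition of a vector configuration $V$ into subconfigurations. Then $\operatorname{codeg}^*(V)\ge\sum_{i=0}^m\operatorname{codeg}^*(V_i)$.
   Context: A vector configuration is a finite family (repetitions allowed) of vectors in $\mathbb{R}^r$; cardinalities count multiplicities. For a nonzero linear functional $f$ on $\mathbb{R}^r$ let $H=\{f=0\}$ and $\overline{H}^-=\{f\le0\}$. The dual codegree of a configuration $W$ is $\operatorname{codeg}^*(W)=\min_H|\overline{H}^-\cap W|$, the minimum over all such oriented linear hyperplanes $H$ of $\mathbb{R}^r$. *)

theory Defs
  imports "HOL-Analysis.Analysis" "HOL-Library.Multiset"
begin

text \<open>A vector configuration in R^r is a finite multiset of vectors of type real^'n
  (r = CARD('n)).\<close>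

definition dual_codeg :: "(real ^ 'n) multiset \<Rightarrow> nat" where
  "dual_codeg W = Min {size (filter_mset (\<lambda>v. f v \<le> 0) W) | f :: real ^ 'n \<Rightarrow> real.
                        linear f \<and> f \<noteq> (\<lambda>_. 0)}"

end

theory Submission
  imports Defs
begin

text \<open>Take a hyperplane attaining the dual codegree of the union. The multiplicity counting
  of its closed negative halfspace splits over the parts, and on each part it is at least
  the dual codegree of that part.\<close>

definition halfspace_counts :: "(real ^ 'n) multiset \<Rightarrow> nat set" where
  "halfspace_counts W = {size (filter_mset (\<lambda>v. f v \<le> 0) W) | f :: real ^ 'n \<Rightarrow> real.
                           linear f \<and> f \<noteq> (\<lambda>_. 0)}"

lemma dual_codeg_eq_Min_halfspace_counts: "dual_codeg W = Min (halfspace_counts W)"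
  unfolding dual_codeg_def halfspace_counts_def ..

lemma finite_halfspace_counts: "finite (halfspace_counts W)"
  by (rule finite_subset[of _ "{..size W}"])
    (auto simp: halfspace_counts_def intro: size_filter_mset_lesseq)

lemma halfspace_counts_nonempty: "halfspace_counts (W :: (real ^ 'n) multiset) \<noteq> {}"
proof -
  obtain k :: 'n where True by blast
  let ?f = "\<lambda>x :: real ^ 'n. x $ k"
  have "linear ?f"
    by (simp add: bounded_linear.linear bounded_linear_vec_nth)
  moreover have "?f \<noteq> (\<lambda>_. 0)"
    by (metis axis_nth zero_neq_one)
  ultimately show ?thesis
    unfolding halfspace_counts_def by blast
qed

lemma dual_codeg_le_halfspace_count:
  fixes f :: "real ^ 'n \<Rightarrow> real"
  assumes "linear f" "f \<noteq> (\<lambda>_. 0)"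
  shows "dual_codeg W \<le> size (filter_mset (\<lambda>v. f v \<le> 0) W)"
  unfolding dual_codeg_eq_Min_halfspace_counts
  using assms by (intro Min_le finite_halfspace_counts) (auto simp: halfspace_counts_def)

lemma dual_codeg_attained:
  obtains f :: "real ^ 'n \<Rightarrow> real"
  where "linear f" "f \<noteq> (\<lambda>_. 0)" "dual_codeg W = size (filter_mset (\<lambda>v. f v \<le> 0) W)"
proof -
  have "dual_codeg W \<in> halfspace_counts W"
    unfolding dual_codeg_eq_Min_halfspace_counts
    by (rule Min_in[OF finite_halfspace_counts halfspace_counts_nonempty])
  then show ?thesis
    using that unfolding halfspace_counts_def by blast
qed

lemma size_filter_mset_sum:
  "size (filter_mset P (\<Sum>i\<in>A. Vs i)) = (\<Sum>i\<in>A. size (filter_mset P (Vs i)))"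
  by (induction A rule: infinite_finite_induct) (auto simp: size_union)

lemma dual_codeg_sum_ge:
  fixes Vs :: "'i \<Rightarrow> (real ^ 'n) multiset"
  shows "(\<Sum>i\<in>A. dual_codeg (Vs i)) \<le> dual_codeg (\<Sum>i\<in>A. Vs i)"
proof -
  obtain f :: "real ^ 'n \<Rightarrow> real" where f: "linear f" "f \<noteq> (\<lambda>_. 0)"
    and attained: "dual_codeg (\<Sum>i\<in>A. Vs i) = size (filter_mset (\<lambda>v. f v \<le> 0) (\<Sum>i\<in>A. Vs i))"
    by (rule dual_codeg_attained)
  have "(\<Sum>i\<in>A. dual_codeg (Vs i)) \<le> (\<Sum>i\<in>A. size (filter_mset (\<lambda>v. f v \<le> 0) (Vs i)))"
    by (intro sum_mono dual_codeg_le_halfspace_count f)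
  also have "\<dots> = dual_codeg (\<Sum>i\<in>A. Vs i)"
    by (simp add: attained size_filter_mset_sum)
  finally show ?thesis .
qed

theorem mainTheorem5:
  fixes V :: "(real ^ 'n) multiset" and Vs :: "nat \<Rightarrow> (real ^ 'n) multiset" and m :: nat
  assumes "V = (\<Sum>i\<in>{0..m}. Vs i)"
  shows "dual_codeg V \<ge> (\<Sum>i\<in>{0..m}. dual_codeg (Vs i))"
  using dual_codeg_sum_ge assms by simp

end
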